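(* If $2^{a_1}3^{a_2}5^{a_3}\cdots=\prod_i p_i^{a_i}$ is a reduced integer, then $a_2\ge a_3\ge a_4\ge\cdots$.
   Context: Let $p_i$ denote the $i$-th prime ($p_1=2$). A positive integer $\prod_i p_i^{a_i}$ (with $a_i=0$ for all sufficiently large $i$) is called reduced if $\left\lfloor\frac{a_i+1}{a_j+2}\right\rfloor<\frac{\log p_j}{\log p_i}$ for all $i,j\ne 1$, and $2^{a_1}<8p_j^2$ for every $j$ with $a_j=0$. *)

theory Defs
  imports "HOL-Computational_Algebra.Primes" "HOL-Library.Infinite_Set" Complex_Main
begin

text \<open>The i-th prime, 1-indexed: pr 1 = 2, pr 2 = 3, pr 3 = 5, ...\<close>
definition pr :: "nat \<Rightarrow> nat" where
  "pr i = enumerate {p::nat. prime p} (i - 1)"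

definition ex :: "nat \<Rightarrow> nat \<Rightarrow> nat" where
  "ex n i = multiplicity (pr i) n"

definition reduced :: "nat \<Rightarrow> bool" where
  "reduced n \<longleftrightarrow> n > 0 \<and>
     (\<forall>i j. i \<ge> 2 \<and> j \<ge> 2 \<longrightarrow>
        real_of_int \<lfloor>real (ex n i + 1) / real (ex n j + 2)\<rfloor>
          < ln (real (pr j)) / ln (real (pr i))) \<and>
     (\<forall>j. j \<ge> 1 \<and> ex n j = 0 \<longrightarrow> (2::nat) ^ ex n 1 < 8 * pr j ^ 2)"

end

theory Submission
  imports Defs
begin

text \<open>Apply the first reducedness condition to the pair of indices (i + 1, i): its right-hand
  side log p_i / log p_(i+1) is below 1 because the primes increase, so the floor of
  (a_(i+1) + 1) / (a_i + 2) vanishes, i.e. a_(i+1) + 1 < a_i + 2.\<close>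

lemma prime_pr: "prime (pr i)"
  unfolding pr_def using enumerate_in_set[OF primes_infinite] by simp

lemma pr_strict_mono: "1 \<le> i \<Longrightarrow> i < j \<Longrightarrow> pr i < pr j"
  unfolding pr_def using strict_mono_enumerate[OF primes_infinite]
  by (simp add: strict_mono_def)

lemma ln_div_ln_less_one:
  fixes x y :: real
  assumes "1 < x" "x < y"
  shows "ln x / ln y < 1"
  using assms by simp

lemma floor_Suc_div_less_one_iff:
  "\<lfloor>real (b + 1) / real (a + 2)\<rfloor> < 1 \<longleftrightarrow> b \<le> a"
proof -
  have "\<lfloor>real (b + 1) / real (a + 2)\<rfloor> < 1 \<longleftrightarrow> real (b + 1) / real (a + 2) < 1"
    by (simp add: floor_less_iff)
  also have "\<dots> \<longleftrightarrow> b \<le> a"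
    by (simp add: divide_less_eq, linarith)
  finally show ?thesis .
qed

lemma reduced_floor_less_ln_ratio:
  assumes "reduced n" "2 \<le> i" "2 \<le> j"
  shows "real_of_int \<lfloor>real (ex n i + 1) / real (ex n j + 2)\<rfloor>
           < ln (real (pr j)) / ln (real (pr i))"
  using assms unfolding reduced_def by blast

theorem lemma3p11:
  fixes n :: nat
  assumes "reduced n"
  shows "\<forall>i \<ge> 2. ex n (i + 1) \<le> ex n i"
proof (intro allI impI)
  fix i :: nat
  assume "i \<ge> 2"
  then have floor_bound: "real_of_int \<lfloor>real (ex n (i + 1) + 1) / real (ex n i + 2)\<rfloor>
      < ln (real (pr i)) / ln (real (pr (i + 1)))"
    using reduced_floor_less_ln_ratio[OF assms] by simp
  have "1 < real (pr i)"
    using prime_gt_1_nat[OF prime_pr] by simp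
  moreover have "real (pr i) < real (pr (i + 1))"
    using pr_strict_mono \<open>i \<ge> 2\<close> by simp
  ultimately have "ln (real (pr i)) / ln (real (pr (i + 1))) < 1"
    by (rule ln_div_ln_less_one)
  with floor_bound have "\<lfloor>real (ex n (i + 1) + 1) / real (ex n i + 2)\<rfloor> < 1"
    by linarith
  then show "ex n (i + 1) \<le> ex n i"
    by (simp only: floor_Suc_div_less_one_iff)
qed

end
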